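(* Let $M$ be an $n\times n$ row-stochastic (transition) matrix whose entries can be computed to arbitrary precision locally, distributed so that machine $i$ holds row $i$. Let $k$ be a power of $2$ with $k=O(n^{c_3})$ for a constant $c_3>0$, and let $\beta=\Omega(n^{-c_4})$ for a constant $c_4>0$. Then in the CongestedClique model one can compute, in $\tilde{O}(n^{\alpha})$ rounds, a matrix $\widehat{M}$ (machine $i$ holding row $i$) with $M^k[i,j]-\beta\le \widehat{M}[i,j]\le M^k[i,j]$ for all $i,j$ (subtractive error at most $\beta$).
   Context: The CongestedClique model: $n$ machines with IDs $1,\dots,n$; computation proceeds in synchronous rounds; in each round every machine performs arbitrary local computation and then sends a possibly different message of $O(\log n)$ bits to every other machine; complexity is the number of rounds. $\alpha$ denotes an exponent such that the product of two $n\times n$ matrices with $O(\log n)$-bit entries, machine $i$ holding row $i$ of each, can be computed (machine $i$ ending with row $i$ of the product) in $O(n^\alpha)$ rounds (currently $\alpha\approx 0.158$). $\tilde{O}(f)=O(f\cdot\mathrm{poly}\log n)$. *)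

theory Defs
  imports Complex_Main
begin

text \<open>Machines have IDs 0..n-1. Since local computation is unrestricted, the state of a
machine is w.l.o.g. its ID, its input and everything it has received so far.
A protocol consists of a message function  msg i x_i h t j  (the message machine i with
input x_i and history h sends to machine j in round t) and an output function
out i x_i h.\<close>

type_synonym cc_hist = "nat \<Rightarrow> nat \<Rightarrow> bool list"
type_synonym 'i cc_msgf = "nat \<Rightarrow> 'i \<Rightarrow> cc_hist \<Rightarrow> nat \<Rightarrow> nat \<Rightarrow> bool list"
type_synonym ('i, 'o) cc_outf = "nat \<Rightarrow> 'i \<Rightarrow> cc_hist \<Rightarrow> 'o"

primrec cc_hist :: "nat \<Rightarrow> 'i cc_msgf \<Rightarrow> (nat \<Rightarrow> 'i) \<Rightarrow> nat \<Rightarrow> nat \<Rightarrow> cc_hist" where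
  "cc_hist n m x 0 = (\<lambda>i s j. [])"
| "cc_hist n m x (Suc t) =
     (\<lambda>i s j. if s < t then cc_hist n m x t i s j
              else if s = t \<and> j < n then m j (x j) (cc_hist n m x t j) t i
              else [])"

definition cc_output :: "nat \<Rightarrow> 'i cc_msgf \<Rightarrow> ('i, 'o) cc_outf \<Rightarrow> (nat \<Rightarrow> 'i) \<Rightarrow> nat \<Rightarrow> nat \<Rightarrow> 'o" where
  "cc_output n m out x T i = out i (x i) (cc_hist n m x T i)"

definition cc_bounded :: "nat \<Rightarrow> 'i cc_msgf \<Rightarrow> bool" where
  "cc_bounded w m \<longleftrightarrow> (\<forall>i xi h t j. length (m i xi h t j) \<le> w)"

definition cc_bw :: "nat \<Rightarrow> nat \<Rightarrow> nat" where
  "cc_bw b n = b * (nat \<lceil>log 2 (real n)\<rceil> + 1)"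

definition mm_exponent :: "real \<Rightarrow> bool" where
  "mm_exponent \<alpha> \<longleftrightarrow>
     (\<forall>c::nat. \<exists>(b::nat) (C::real) (N::nat). \<forall>n\<ge>N.
        \<exists>(T::nat) (m :: ((nat \<Rightarrow> int) \<times> (nat \<Rightarrow> int)) cc_msgf)
          (out :: ((nat \<Rightarrow> int) \<times> (nat \<Rightarrow> int), nat \<Rightarrow> int) cc_outf).
          real T \<le> C * real n powr \<alpha> \<and> cc_bounded (cc_bw b n) m \<and>
          (\<forall>A B :: nat \<Rightarrow> nat \<Rightarrow> int.
             (\<forall>i<n. \<forall>j<n. \<bar>A i j\<bar> \<le> int n ^ c \<and> \<bar>B i j\<bar> \<le> int n ^ c) \<longrightarrow>
             (\<forall>i<n. \<forall>j<n. cc_output n m out (\<lambda>l. (A l, B l)) T i j = (\<Sum>l<n. A i l * B l j))))"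

definition row_stochastic :: "nat \<Rightarrow> (nat \<Rightarrow> nat \<Rightarrow> real) \<Rightarrow> bool" where
  "row_stochastic n M \<longleftrightarrow> (\<forall>i<n. (\<forall>j<n. 0 \<le> M i j) \<and> (\<Sum>j<n. M i j) = 1)"

primrec mat_pow :: "nat \<Rightarrow> (nat \<Rightarrow> nat \<Rightarrow> real) \<Rightarrow> nat \<Rightarrow> nat \<Rightarrow> nat \<Rightarrow> real" where
  "mat_pow n M 0 = (\<lambda>i j. if i = j then 1 else 0)"
| "mat_pow n M (Suc k) = (\<lambda>i j. \<Sum>l<n. mat_pow n M k i l * M l j)"

end

theory Submission
  imports Defs
begin

text \<open>Compute \<open>M\<^sup>k\<close>, \<open>k = 2\<^sup>e\<close>, by \<open>e = O(log n)\<close> squarings in fixed-point arithmetic with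
  denominator \<open>N = n\<^sup>c\<close>: an approximation \<open>Q\<close> is stored as the integer matrix \<open>N Q\<close>, the integer
  product is computed by the fast matrix multiplication protocol (its entries are at most \<open>N\<close>,
  so they fit into \<open>O(log n)\<close> bits) and divided by \<open>N\<close>, rounding down. Rounding down keeps every
  approximation entrywise below the exact power, and if all row sums of \<open>P - Q\<close> are at most
  \<open>\<epsilon>\<close>, then those of \<open>P\<^sup>2 - Q'\<close> are at most \<open>2\<epsilon> + n/N\<close>. Hence the final error is below
  \<open>2k n/N\<close>, which is at most \<open>\<beta>\<close> once \<open>c \<ge> c3 + c4 + 2\<close>. The \<open>e\<close> squarings are run one after
  another, each taking the \<open>O(n\<^sup>\<alpha>)\<close> rounds of the multiplication protocol.\<close>

section \<open>Running a protocol in consecutive phases\<close>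

lemma cc_hist_explicit:
  "cc_hist n m x t i s j = (if s < t \<and> j < n then m j (x j) (cc_hist n m x s j) s i else [])"
  by (induction t arbitrary: i s j) auto

definition phase_hist :: "nat \<Rightarrow> cc_hist \<Rightarrow> nat \<Rightarrow> nat \<Rightarrow> cc_hist" where
  "phase_hist T0 h p r = (\<lambda>r' j. if r' < r then h (p * T0 + r') j else [])"

primrec phase_state ::
  "nat \<Rightarrow> ('a, 'o) cc_outf \<Rightarrow> (nat \<Rightarrow> 'i \<Rightarrow> 'a) \<Rightarrow> (nat \<Rightarrow> 'o \<Rightarrow> 'a)
     \<Rightarrow> nat \<Rightarrow> 'i \<Rightarrow> cc_hist \<Rightarrow> nat \<Rightarrow> 'a"
where
  "phase_state T0 out0 init step i xi h 0 = init i xi"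
| "phase_state T0 out0 init step i xi h (Suc p) =
     step i (out0 i (phase_state T0 out0 init step i xi h p) (phase_hist T0 h p T0))"

text \<open>Round \<open>s\<close> is round \<open>s mod T0\<close> of phase \<open>s div T0\<close>: each machine recomputes its state at
  the start of the current phase from its own history and runs the base protocol from it.\<close>
definition phased_msg ::
  "nat \<Rightarrow> 'a cc_msgf \<Rightarrow> ('a, 'o) cc_outf \<Rightarrow> (nat \<Rightarrow> 'i \<Rightarrow> 'a) \<Rightarrow> (nat \<Rightarrow> 'o \<Rightarrow> 'a) \<Rightarrow> 'i cc_msgf"
where
  "phased_msg T0 m0 out0 init step i xi h s =
     m0 i (phase_state T0 out0 init step i xi h (s div T0))
       (phase_hist T0 h (s div T0) (s mod T0)) (s mod T0)"

primrec phase_states ::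
  "nat \<Rightarrow> nat \<Rightarrow> 'a cc_msgf \<Rightarrow> ('a, 'o) cc_outf \<Rightarrow> (nat \<Rightarrow> 'i \<Rightarrow> 'a) \<Rightarrow> (nat \<Rightarrow> 'o \<Rightarrow> 'a)
     \<Rightarrow> (nat \<Rightarrow> 'i) \<Rightarrow> nat \<Rightarrow> nat \<Rightarrow> 'a"
where
  "phase_states n T0 m0 out0 init step x 0 = (\<lambda>i. init i (x i))"
| "phase_states n T0 m0 out0 init step x (Suc p) =
     (\<lambda>i. step i (cc_output n m0 out0 (phase_states n T0 m0 out0 init step x p) T0 i))"

lemma cc_bounded_phased_msg:
  "cc_bounded w m0 \<Longrightarrow> cc_bounded w (phased_msg T0 m0 out0 init step)"
  unfolding cc_bounded_def phased_msg_def by blast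

lemma phase_hist_phased_msg:
  assumes state: "\<And>t j. p * T0 \<le> t \<Longrightarrow>
      phase_state T0 out0 init step j (x j) (cc_hist n (phased_msg T0 m0 out0 init step) x t j) p = y j"
    and "r \<le> T0" and "p * T0 + r \<le> t"
  shows "phase_hist T0 (cc_hist n (phased_msg T0 m0 out0 init step) x t i) p r = cc_hist n m0 y r i"
  using assms(2,3)
proof (induction r arbitrary: t i rule: less_induct)
  case (less r)
  show ?case
  proof (intro ext)
    fix r' j
    let ?h = "cc_hist n (phased_msg T0 m0 out0 init step) x (p * T0 + r') j"
    show "phase_hist T0 (cc_hist n (phased_msg T0 m0 out0 init step) x t i) p r r' j
        = cc_hist n m0 y r i r' j"
    proof (cases "r' < r \<and> j < n")
      case True
      then have "(p * T0 + r') div T0 = p" "(p * T0 + r') mod T0 = r'"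
        using less.prems by auto
      moreover have "phase_state T0 out0 init step j (x j) ?h p = y j"
        by (rule state) simp
      moreover have "phase_hist T0 ?h p r' = cc_hist n m0 y r' j"
        using True less by simp
      ultimately show ?thesis
        using True less.prems by (simp add: phase_hist_def phased_msg_def cc_hist_explicit)
    next
      case False
      then show ?thesis by (auto simp: phase_hist_def cc_hist_explicit)
    qed
  qed
qed

lemma phase_state_phased_msg:
  "p * T0 \<le> t \<Longrightarrow>
   phase_state T0 out0 init step i (x i) (cc_hist n (phased_msg T0 m0 out0 init step) x t i) p
     = phase_states n T0 m0 out0 init step x p i"
proof (induction p arbitrary: t i)
  case 0
  then show ?case by simp
next
  case (Suc p)
  have "phase_hist T0 (cc_hist n (phased_msg T0 m0 out0 init step) x t i) p T0
      = cc_hist n m0 (phase_states n T0 m0 out0 init step x p) T0 i"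
    by (rule phase_hist_phased_msg[OF Suc.IH]) (use Suc.prems in auto)
  then show ?case
    using Suc by (simp add: cc_output_def)
qed

section \<open>Approximate squaring of stochastic matrices\<close>

definition mat_mult ::
  "nat \<Rightarrow> (nat \<Rightarrow> nat \<Rightarrow> 'a::semiring_0) \<Rightarrow> (nat \<Rightarrow> nat \<Rightarrow> 'a) \<Rightarrow> nat \<Rightarrow> nat \<Rightarrow> 'a" where
  "mat_mult n A B = (\<lambda>i j. \<Sum>l<n. A i l * B l j)"

lemma mat_pow_1: "i < n \<Longrightarrow> mat_pow n M 1 i j = M i j"
  by (simp add: of_bool_def[symmetric])

lemma mat_pow_add:
  assumes "j < n"
  shows "mat_pow n M (a + b) i j = mat_mult n (mat_pow n M a) (mat_pow n M b) i j"
  using assms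
proof (induction b arbitrary: j)
  case 0
  then show ?case by (simp add: mat_mult_def if_distrib sum.delta' cong: if_cong)
next
  case (Suc b)
  have "mat_pow n M (a + Suc b) i j = (\<Sum>l<n. (\<Sum>l'<n. mat_pow n M a i l' * mat_pow n M b l' l) * M l j)"
    using Suc.IH by (simp add: mat_mult_def)
  also have "\<dots> = (\<Sum>l'<n. mat_pow n M a i l' * (\<Sum>l<n. mat_pow n M b l' l * M l j))"
    by (simp add: sum_distrib_left sum_distrib_right mult.assoc) (rule sum.swap)
  finally show ?case by (simp add: mat_mult_def)
qed

lemma row_stochastic_mat_pow:
  assumes "row_stochastic n M"
  shows "row_stochastic n (mat_pow n M k)"
proof (induction k)
  case 0
  then show ?case by (simp add: row_stochastic_def sum.delta')
next
  case (Suc k)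
  have "(\<Sum>j<n. mat_pow n M (Suc k) i j) = (\<Sum>l<n. mat_pow n M k i l * (\<Sum>j<n. M l j))" for i
    by (simp add: sum_distrib_left) (rule sum.swap)
  with Suc assms show ?case
    by (auto simp: row_stochastic_def intro!: sum_nonneg)
qed

lemma row_stochastic_le_1:
  assumes "row_stochastic n P" "i < n" "j < n"
  shows "P i j \<le> 1"
proof -
  have "P i j \<le> (\<Sum>j<n. P i j)"
    using assms by (intro member_le_sum) (auto simp: row_stochastic_def)
  then show ?thesis
    using assms by (simp add: row_stochastic_def)
qed

definition under_approx :: "nat \<Rightarrow> real \<Rightarrow> (nat \<Rightarrow> nat \<Rightarrow> real) \<Rightarrow> (nat \<Rightarrow> nat \<Rightarrow> real) \<Rightarrow> bool" where
  "under_approx n \<epsilon> P Q \<longleftrightarrow>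
     (\<forall>i<n. (\<forall>j<n. 0 \<le> Q i j \<and> Q i j \<le> P i j) \<and> (\<Sum>j<n. P i j - Q i j) \<le> \<epsilon>)"

lemma under_approx_cong:
  assumes "\<And>i j. i < n \<Longrightarrow> j < n \<Longrightarrow> P i j = P' i j"
  shows "under_approx n \<epsilon> P Q = under_approx n \<epsilon> P' Q"
proof -
  have "(\<Sum>j<n. P i j - Q i j) = (\<Sum>j<n. P' i j - Q i j)" if "i < n" for i
    using assms that by (intro sum.cong) auto
  then show ?thesis
    using assms by (auto simp: under_approx_def)
qed

lemma under_approx_entry:
  assumes "under_approx n \<epsilon> P Q" "i < n" "j < n"
  shows "P i j - \<epsilon> \<le> Q i j"
proof -
  have "P i j - Q i j \<le> (\<Sum>j<n. P i j - Q i j)"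
    using assms by (intro member_le_sum) (auto simp: under_approx_def)
  then show ?thesis
    using assms by (auto simp: under_approx_def)
qed

text \<open>\<open>P\<^sup>2 - Q' = P (P - Q) + (P - Q) Q + (Q\<^sup>2 - Q')\<close>; the first two terms have row sums at most
  \<open>\<epsilon>\<close> because \<open>P\<close> and \<open>Q\<close> have row sums at most \<open>1\<close>.\<close>
lemma under_approx_mat_mult:
  assumes P: "row_stochastic n P" and Q: "under_approx n \<epsilon> P Q"
    and Q': "\<And>i j. i < n \<Longrightarrow> j < n \<Longrightarrow>
      0 \<le> Q' i j \<and> mat_mult n Q Q i j - \<delta> \<le> Q' i j \<and> Q' i j \<le> mat_mult n Q Q i j"
  shows "under_approx n (2 * \<epsilon> + real n * \<delta>) (mat_mult n P P) Q'"
  unfolding under_approx_def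
proof (intro allI impI conjI)
  fix i j assume "i < n" "j < n"
  have "mat_mult n Q Q i j \<le> mat_mult n P P i j"
    using Q \<open>i < n\<close> \<open>j < n\<close> unfolding mat_mult_def under_approx_def
    by (intro sum_mono mult_mono) (auto intro: order_trans)
  then show "0 \<le> Q' i j" "Q' i j \<le> mat_mult n P P i j"
    using Q' \<open>i < n\<close> \<open>j < n\<close> by force+
next
  fix i assume i: "i < n"
  have row_Q: "(\<Sum>j<n. Q l j) \<le> 1" if "l < n" for l
  proof -
    have "(\<Sum>j<n. Q l j) \<le> (\<Sum>j<n. P l j)"
      using Q that by (intro sum_mono) (auto simp: under_approx_def)
    then show ?thesis using P that by (simp add: row_stochastic_def)
  qed
  have "(\<Sum>j<n. mat_mult n P P i j - Q' i j) \<le> (\<Sum>j<n. mat_mult n P P i j - mat_mult n Q Q i j + \<delta>)"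
    using Q' i by (intro sum_mono) force
  also have "\<dots> = (\<Sum>j<n. \<Sum>l<n. P i l * (P l j - Q l j) + (P i l - Q i l) * Q l j) + real n * \<delta>"
    by (simp add: mat_mult_def sum.distrib sum_subtractf algebra_simps)
  also have "(\<Sum>j<n. \<Sum>l<n. P i l * (P l j - Q l j) + (P i l - Q i l) * Q l j)
      = (\<Sum>l<n. P i l * (\<Sum>j<n. P l j - Q l j)) + (\<Sum>l<n. (P i l - Q i l) * (\<Sum>j<n. Q l j))"
    by (subst sum.swap) (simp add: sum.distrib sum_distrib_left)
  also have "(\<Sum>l<n. P i l * (\<Sum>j<n. P l j - Q l j)) \<le> (\<Sum>l<n. P i l * \<epsilon>)"
    using P Q i by (intro sum_mono mult_left_mono) (auto simp: row_stochastic_def under_approx_def)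
  also have "(\<Sum>l<n. P i l * \<epsilon>) = \<epsilon>"
    using P i by (simp add: row_stochastic_def sum_distrib_right[symmetric])
  also have "(\<Sum>l<n. (P i l - Q i l) * (\<Sum>j<n. Q l j)) \<le> (\<Sum>l<n. P i l - Q i l)"
    using Q row_Q i by (intro sum_mono mult_right_le_one_le) (auto simp: under_approx_def intro: sum_nonneg)
  also have "\<dots> \<le> \<epsilon>"
    using Q i by (simp add: under_approx_def)
  finally show "(\<Sum>j<n. mat_mult n P P i j - Q' i j) \<le> 2 * \<epsilon> + real n * \<delta>"
    by simp
qed

text \<open>The integer matrix \<open>A\<close> represents the real matrix \<open>A / N\<close>.\<close>
primrec rounded_squares :: "nat \<Rightarrow> int \<Rightarrow> (nat \<Rightarrow> nat \<Rightarrow> real) \<Rightarrow> nat \<Rightarrow> nat \<Rightarrow> nat \<Rightarrow> int" where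
  "rounded_squares n N M 0 = (\<lambda>i j. \<lfloor>M i j * of_int N\<rfloor>)"
| "rounded_squares n N M (Suc p) =
     (\<lambda>i j. mat_mult n (rounded_squares n N M p) (rounded_squares n N M p) i j div N)"

lemma floor_scaled_bounds:
  fixes x N :: real
  assumes "0 < N"
  shows "x - 1 / N \<le> \<lfloor>x * N\<rfloor> / N" and "\<lfloor>x * N\<rfloor> / N \<le> x"
proof -
  have "x - 1 / N = (x * N - 1) / N"
    using assms by (simp add: field_simps)
  also have "\<dots> \<le> \<lfloor>x * N\<rfloor> / N"
    using assms by (intro divide_right_mono) linarith+
  finally show "x - 1 / N \<le> \<lfloor>x * N\<rfloor> / N" .
  have "\<lfloor>x * N\<rfloor> / N \<le> x * N / N"
    using assms by (intro divide_right_mono) linarith+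
  then show "\<lfloor>x * N\<rfloor> / N \<le> x"
    using assms by simp
qed

lemma rounded_squares_under_approx:
  assumes N: "0 < N" and M: "row_stochastic n M"
  shows "under_approx n ((2 ^ (p + 1) - 1) * real n / N) (mat_pow n M (2 ^ p))
           (\<lambda>i j. rounded_squares n N M p i j / N)"
proof (induction p)
  case 0
  have "under_approx n (n / N) M (\<lambda>i j. rounded_squares n N M 0 i j / N)"
    unfolding under_approx_def
  proof (intro allI impI conjI)
    fix i j assume "i < n" "j < n"
    then have "0 \<le> M i j"
      using M by (simp add: row_stochastic_def)
    then show "0 \<le> rounded_squares n N M 0 i j / N"
      using N by simp
    show "rounded_squares n N M 0 i j / N \<le> M i j"
      using N floor_scaled_bounds(2) by simp
  next
    fix i assume "i < n"
    have "M i j - rounded_squares n N M 0 i j / N \<le> 1 / N" for j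
      using floor_scaled_bounds(1)[OF of_int_pos[OF N], of "M i j"] by simp
    then have "(\<Sum>j<n. M i j - rounded_squares n N M 0 i j / N) \<le> (\<Sum>j<n. 1 / N)"
      by (intro sum_mono)
    then show "(\<Sum>j<n. M i j - rounded_squares n N M 0 i j / N) \<le> n / N"
      by simp
  qed
  moreover have "under_approx n \<epsilon> (mat_pow n M 1) Q = under_approx n \<epsilon> M Q" for \<epsilon> Q
    by (rule under_approx_cong) (rule mat_pow_1)
  ultimately show ?case
    by (simp del: mat_pow.simps)
next
  case (Suc p)
  let ?P = "mat_pow n M (2 ^ p)"
  let ?Q = "\<lambda>i j. rounded_squares n N M p i j / N"
  let ?Q' = "\<lambda>i j. rounded_squares n N M (Suc p) i j / N"
  let ?\<epsilon> = "2 * ((2 ^ (p + 1) - 1) * real n / N) + real n * (1 / N)"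
  have rounded: "?Q' i j = \<lfloor>mat_mult n ?Q ?Q i j * N\<rfloor> / N" for i j
  proof -
    have "mat_mult n ?Q ?Q i j * N = mat_mult n (rounded_squares n N M p) (rounded_squares n N M p) i j / N"
      unfolding mat_mult_def sum_distrib_right of_int_sum sum_divide_distrib
      using N by (intro sum.cong) simp_all
    then show ?thesis
      by (simp add: floor_divide_of_int_eq)
  qed
  have "0 \<le> ?Q' i j \<and> mat_mult n ?Q ?Q i j - 1 / N \<le> ?Q' i j \<and> ?Q' i j \<le> mat_mult n ?Q ?Q i j"
    if "i < n" "j < n" for i j
  proof -
    have "0 \<le> mat_mult n ?Q ?Q i j"
      using Suc.IH that unfolding mat_mult_def under_approx_def
      by (intro sum_nonneg mult_nonneg_nonneg) blast+
    then show ?thesis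
      unfolding rounded using N floor_scaled_bounds[OF of_int_pos[OF N]] by simp
  qed
  then have "under_approx n ?\<epsilon> (mat_mult n ?P ?P) ?Q'"
    by (intro under_approx_mat_mult[OF row_stochastic_mat_pow[OF M] Suc.IH])
  moreover have "under_approx n ?\<epsilon> (mat_mult n ?P ?P) ?Q' = under_approx n ?\<epsilon> (mat_pow n M (2 ^ Suc p)) ?Q'"
    using mat_pow_add[of _ n M "2 ^ p" "2 ^ p"] by (intro under_approx_cong) (simp add: mult_2)
  moreover have "?\<epsilon> = (2 ^ (Suc p + 1) - 1) * real n / N"
    by (simp add: diff_divide_distrib add_divide_distrib[symmetric] algebra_simps)
  ultimately show ?case
    by simp
qed

lemma rounded_squares_bounds:
  assumes N: "0 < N" and M: "row_stochastic n M" and "i < n" "j < n"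
  shows "0 \<le> rounded_squares n N M p i j \<and> rounded_squares n N M p i j \<le> N"
proof -
  have "0 \<le> rounded_squares n N M p i j / N \<and> rounded_squares n N M p i j / N \<le> mat_pow n M (2 ^ p) i j"
    using rounded_squares_under_approx[OF N M, of p] \<open>i < n\<close> \<open>j < n\<close> by (simp add: under_approx_def)
  moreover have "mat_pow n M (2 ^ p) i j \<le> 1"
    using row_stochastic_le_1[OF row_stochastic_mat_pow[OF M]] \<open>i < n\<close> \<open>j < n\<close> .
  ultimately have "0 \<le> rounded_squares n N M p i j / N \<and> rounded_squares n N M p i j / N \<le> 1"
    by linarith
  then show ?thesis
    using N by (simp add: zero_le_divide_iff divide_le_eq_1)
qed

section \<open>Fixed-point squaring in the CongestedClique\<close>

definition computes_products ::
  "nat \<Rightarrow> int \<Rightarrow> nat \<Rightarrow> ((nat \<Rightarrow> int) \<times> (nat \<Rightarrow> int)) cc_msgf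
     \<Rightarrow> ((nat \<Rightarrow> int) \<times> (nat \<Rightarrow> int), nat \<Rightarrow> int) cc_outf \<Rightarrow> bool"
where
  "computes_products n N T m out \<longleftrightarrow>
     (\<forall>A B. (\<forall>i<n. \<forall>j<n. \<bar>A i j\<bar> \<le> N \<and> \<bar>B i j\<bar> \<le> N) \<longrightarrow>
        (\<forall>i<n. \<forall>j<n. cc_output n m out (\<lambda>l. (A l, B l)) T i j = mat_mult n A B i j))"

lemma mm_exponentD:
  assumes "mm_exponent \<alpha>"
  shows "\<exists>b C N0. \<forall>n\<ge>N0. \<exists>T m out. real T \<le> C * real n powr \<alpha> \<and>
    cc_bounded (cc_bw b n) m \<and> computes_products n (int n ^ c) T m out"
  using assms unfolding mm_exponent_def computes_products_def mat_mult_def by (rule spec)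

lemma rounded_squares_protocol:
  assumes mm: "computes_products n N T0 m0 out0" and bounded: "cc_bounded w m0"
    and N: "0 < N" and t: "e * T0 \<le> t"
  shows "\<exists>m out. cc_bounded w m \<and> (\<forall>M. row_stochastic n M \<longrightarrow>
           (\<forall>i<n. \<forall>j<n. cc_output n m out M t i j = rounded_squares n N M e i j / N))"
proof -
  define init :: "nat \<Rightarrow> (nat \<Rightarrow> real) \<Rightarrow> (nat \<Rightarrow> int) \<times> (nat \<Rightarrow> int)"
    where "init i row = (\<lambda>j. \<lfloor>row j * N\<rfloor>, \<lambda>j. \<lfloor>row j * N\<rfloor>)" for i row
  define step :: "nat \<Rightarrow> (nat \<Rightarrow> int) \<Rightarrow> (nat \<Rightarrow> int) \<times> (nat \<Rightarrow> int)"
    where "step i r = (\<lambda>j. r j div N, \<lambda>j. r j div N)" for i r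
  define out :: "(nat \<Rightarrow> real, nat \<Rightarrow> real) cc_outf"
    where "out i row h = (\<lambda>j. fst (phase_state T0 out0 init step i row h e) j / N)" for i row h
  have "cc_output n (phased_msg T0 m0 out0 init step) out M t i j = rounded_squares n N M e i j / N"
    if M: "row_stochastic n M" and "i < n" "j < n" for M i j
  proof -
    define A where "A p l = fst (phase_states n T0 m0 out0 init step M p l)" for p l
    have states: "phase_states n T0 m0 out0 init step M p = (\<lambda>l. (A p l, A p l))" for p
      by (cases p) (simp_all add: A_def init_def step_def)
    have "\<forall>i<n. \<forall>j<n. A p i j = rounded_squares n N M p i j" for p
    proof (induction p)
      case 0
      then show ?case by (simp add: A_def init_def)
    next
      case (Suc p)
      have "\<forall>i<n. \<forall>j<n. \<bar>A p i j\<bar> \<le> N \<and> \<bar>A p i j\<bar> \<le> N"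
        using Suc.IH rounded_squares_bounds[OF N M] by simp
      then have "cc_output n m0 out0 (\<lambda>l. (A p l, A p l)) T0 i j = mat_mult n (A p) (A p) i j"
        if "i < n" "j < n" for i j
        using mm that unfolding computes_products_def by blast
      moreover have "mat_mult n (A p) (A p) i j = mat_mult n (rounded_squares n N M p) (rounded_squares n N M p) i j"
        if "i < n" "j < n" for i j
        using Suc.IH that unfolding mat_mult_def by (intro sum.cong) auto
      ultimately show ?case
        by (simp add: A_def step_def states[of p, symmetric, unfolded A_def])
    qed
    then show ?thesis
      using t \<open>i < n\<close> \<open>j < n\<close> by (simp add: cc_output_def out_def phase_state_phased_msg A_def)
  qed
  then show ?thesis
    using cc_bounded_phased_msg[OF bounded] by blast
qed

definition approx_power_protocol ::
  "nat \<Rightarrow> nat \<Rightarrow> nat \<Rightarrow> nat \<Rightarrow> real \<Rightarrow> (nat \<Rightarrow> real) cc_msgf \<Rightarrow> (nat \<Rightarrow> real, nat \<Rightarrow> real) cc_outf \<Rightarrow> bool"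
where
  "approx_power_protocol n w T k \<beta> m out \<longleftrightarrow> cc_bounded w m \<and>
     (\<forall>M. row_stochastic n M \<longrightarrow> (\<forall>i<n. \<forall>j<n.
        mat_pow n M k i j - \<beta> \<le> cc_output n m out M T i j \<and> cc_output n m out M T i j \<le> mat_pow n M k i j))"

lemma approx_power_protocol_mono:
  "approx_power_protocol n w T k \<beta> m out \<Longrightarrow> \<beta> \<le> \<beta>' \<Longrightarrow> approx_power_protocol n w T k \<beta>' m out"
  unfolding approx_power_protocol_def by force

lemma matrix_power_protocol:
  assumes "computes_products n N T0 m0 out0" "cc_bounded w m0" "0 < N" "e * T0 \<le> t"
  shows "\<exists>m out. approx_power_protocol n w t (2 ^ e) (2 ^ (e + 1) * real n / N) m out"
proof -
  obtain m out where "cc_bounded w m"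
    and rounded_output: "\<And>M i j. row_stochastic n M \<Longrightarrow> i < n \<Longrightarrow> j < n \<Longrightarrow>
      cc_output n m out M t i j = rounded_squares n N M e i j / N"
    using rounded_squares_protocol[OF assms] by blast
  moreover have "mat_pow n M (2 ^ e) i j - 2 ^ (e + 1) * real n / N \<le> rounded_squares n N M e i j / N \<and>
        rounded_squares n N M e i j / N \<le> mat_pow n M (2 ^ e) i j"
    if M: "row_stochastic n M" and "i < n" "j < n" for M i j
  proof -
    note approx = rounded_squares_under_approx[OF \<open>0 < N\<close> M, of e]
    have "(2 ^ (e + 1) - 1) * real n / N \<le> 2 ^ (e + 1) * real n / N"
      using \<open>0 < N\<close> by (intro divide_right_mono mult_right_mono) auto
    then show ?thesis
      using under_approx_entry[OF approx \<open>i < n\<close> \<open>j < n\<close>] approx \<open>i < n\<close> \<open>j < n\<close>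
      by (auto simp: under_approx_def)
  qed
  ultimately have "approx_power_protocol n w t (2 ^ e) (2 ^ (e + 1) * real n / N) m out"
    unfolding approx_power_protocol_def by auto
  then show ?thesis
    by blast
qed

lemma exponent_le_ln:
  fixes C c x :: real
  assumes "2 ^ e \<le> C * x powr c" "0 < C" "0 \<le> c" "3 \<le> x"
  shows "real e \<le> (\<bar>log 2 C\<bar> + c / ln 2) * ln x"
proof -
  have "exp 1 \<le> x"
    using exp_le \<open>3 \<le> x\<close> by linarith
  then have "1 \<le> ln x"
    using \<open>3 \<le> x\<close> by (simp add: ln_ge_iff)
  then have "log 2 C \<le> \<bar>log 2 C\<bar> * ln x"
    by (smt (verit) mult_le_cancel_left1)
  have "real e = log 2 (2 ^ e)"
    by simp
  also have "\<dots> \<le> log 2 (C * x powr c)"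
    using assms by (subst log_le_cancel_iff) auto
  also have "\<dots> = log 2 C + c / ln 2 * ln x"
    using assms by (simp add: log_def ln_mult ln_powr add_divide_distrib)
  also have "\<dots> \<le> (\<bar>log 2 C\<bar> + c / ln 2) * ln x"
    using \<open>log 2 C \<le> \<bar>log 2 C\<bar> * ln x\<close> by (simp add: distrib_right)
  finally show ?thesis .
qed

lemma error_le_inverse_powr:
  fixes c3 c4 C3 C4 :: real
  assumes "1 \<le> n" "2 * C3 / C4 \<le> real n" "0 < C3" "0 < C4" "c3 + c4 + 2 \<le> real c"
    and "real k \<le> C3 * real n powr c3"
  shows "2 * real k * real n / real n ^ c \<le> C4 * real n powr (- c4)"
proof -
  have n: "0 < real n"
    using assms(1) by simp
  have "2 * real k * real n / real n ^ c \<le> 2 * (C3 * real n powr c3) * real n / real n ^ c"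
    using assms(6) n by (intro divide_right_mono mult_right_mono mult_left_mono) auto
  also have "\<dots> = 2 * C3 * real n powr (c3 + 1 - real c)"
    using n by (simp add: powr_add powr_diff powr_realpow)
  also have "\<dots> \<le> 2 * C3 * real n powr (- c4 - 1)"
    using assms by (intro mult_left_mono powr_mono) auto
  also have "\<dots> = (2 * C3 / real n) * real n powr (- c4)"
    using n by (simp add: powr_diff powr_minus divide_simps)
  also have "\<dots> \<le> C4 * real n powr (- c4)"
    using assms(2,4) n by (intro mult_right_mono) (simp_all add: field_simps)
  finally show ?thesis .
qed

lemma approx_power_protocols_within_rounds:
  assumes mm: "computes_products n (int n ^ c) T0 m0 out0" and bounded: "cc_bounded w m0"
    and T0: "real T0 \<le> Cm * real n powr \<alpha>"
    and n: "3 \<le> n" "2 * C3 / C4 \<le> real n"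
    and c: "c3 + c4 + 2 \<le> real c" and pos: "0 < c3" "0 < C3" "0 < C4"
  shows "\<exists>T. real T \<le> (\<bar>Cm\<bar> * (\<bar>log 2 C3\<bar> + c3 / ln 2)) * real n powr \<alpha> * ln (real n) ^ 1 \<and>
    (\<forall>k \<beta>. (\<exists>e. k = 2 ^ e) \<and> real k \<le> C3 * real n powr c3 \<and> \<beta> \<ge> C4 * real n powr (- c4) \<longrightarrow>
      (\<exists>m out. approx_power_protocol n w T k \<beta> m out))"
proof -
  define K where "K = \<bar>log 2 C3\<bar> + c3 / ln 2"
  define E where "E = nat \<lfloor>K * ln (real n)\<rfloor>"
  have "0 \<le> K * ln (real n)"
    using pos n by (simp add: K_def)
  moreover have "real T0 \<le> \<bar>Cm\<bar> * real n powr \<alpha>"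
    using T0 mult_right_mono[OF abs_ge_self powr_ge_zero, of Cm "real n" \<alpha>] by linarith
  ultimately have "real E * real T0 \<le> K * ln (real n) * (\<bar>Cm\<bar> * real n powr \<alpha>)"
    unfolding E_def by (intro mult_mono of_nat_floor) auto
  then have rounds: "real (E * T0) \<le> (\<bar>Cm\<bar> * K) * real n powr \<alpha> * ln (real n) ^ 1"
    by (simp add: algebra_simps)
  have "\<exists>m out. approx_power_protocol n w (E * T0) k \<beta> m out"
    if k: "k = 2 ^ e" "real k \<le> C3 * real n powr c3" and \<beta>: "C4 * real n powr (- c4) \<le> \<beta>" for k e \<beta>
  proof -
    have "e \<le> E"
      using exponent_le_ln[of e C3 "real n" c3] k pos n unfolding E_def K_def by (intro le_nat_floor) simp
    then obtain m out where "approx_power_protocol n w (E * T0) k (2 ^ (e + 1) * real n / of_int (int n ^ c)) m out"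
      using matrix_power_protocol[OF mm bounded, of e "E * T0"] k n by auto
    moreover have "2 ^ (e + 1) * real n / of_int (int n ^ c) \<le> \<beta>"
      using error_le_inverse_powr[of n C3 C4 c3 c4 c k] k \<beta> n c pos by simp
    ultimately show ?thesis
      by (blast intro: approx_power_protocol_mono)
  qed
  with rounds show ?thesis
    unfolding K_def by blast
qed

theorem mainTheorem8:
  fixes \<alpha> c3 c4 C3 C4 :: real
  assumes "mm_exponent \<alpha>"
    and "c3 > 0" and "c4 > 0" and "C3 > 0" and "C4 > 0"
  shows "\<exists>(b::nat) (d::nat) (C::real) (N::nat). \<forall>n\<ge>N. \<exists>T::nat.
           real T \<le> C * real n powr \<alpha> * (ln (real n)) ^ d \<and>
           (\<forall>(k::nat) (\<beta>::real).
              (\<exists>e. k = 2 ^ e) \<and> real k \<le> C3 * real n powr c3 \<and> \<beta> \<ge> C4 * real n powr (- c4) \<longrightarrow>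
              (\<exists>(m :: (nat \<Rightarrow> real) cc_msgf) (out :: (nat \<Rightarrow> real, nat \<Rightarrow> real) cc_outf).
                 cc_bounded (cc_bw b n) m \<and>
                 (\<forall>M. row_stochastic n M \<longrightarrow>
                    (\<forall>i<n. \<forall>j<n.
                       mat_pow n M k i j - \<beta> \<le> cc_output n m out M T i j \<and>
                       cc_output n m out M T i j \<le> mat_pow n M k i j))))"
proof -
  define c :: nat where "c = nat \<lceil>c3 + c4\<rceil> + 2"
  have c: "c3 + c4 + 2 \<le> real c"
    unfolding c_def by linarith
  obtain b Cm N0 where mm: "\<forall>n\<ge>N0. \<exists>T m out. real T \<le> Cm * real n powr \<alpha> \<and>
      cc_bounded (cc_bw b n) m \<and> computes_products n (int n ^ c) T m out"
    using mm_exponentD[OF assms(1)] by blast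
  define C where "C = \<bar>Cm\<bar> * (\<bar>log 2 C3\<bar> + c3 / ln 2)"
  have "\<exists>T. real T \<le> C * real n powr \<alpha> * ln (real n) ^ 1 \<and>
      (\<forall>k \<beta>. (\<exists>e. k = 2 ^ e) \<and> real k \<le> C3 * real n powr c3 \<and> \<beta> \<ge> C4 * real n powr (- c4) \<longrightarrow>
        (\<exists>m out. approx_power_protocol n (cc_bw b n) T k \<beta> m out))"
    if n: "max N0 (nat \<lceil>2 * C3 / C4\<rceil> + 3) \<le> n" for n
  proof -
    obtain T0 m0 out0 where "real T0 \<le> Cm * real n powr \<alpha>" "cc_bounded (cc_bw b n) m0"
      "computes_products n (int n ^ c) T0 m0 out0"
      using mm n by auto
    moreover have "3 \<le> n" "2 * C3 / C4 \<le> real n"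
      using n by linarith+
    ultimately show ?thesis
      unfolding C_def using approx_power_protocols_within_rounds c assms(2,4,5) by blast
  qed
  then show ?thesis
    unfolding approx_power_protocol_def by blast
qed

end
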